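(* Let $(G_1,\precsim_1)$ and $(G_2,\precsim_2)$ be compatible quasi-ordered abelian groups which are elementarily equivalent in the language $\{0,+,-,\precsim\}$. Then the ordered part of $G_1$ is elementarily equivalent to the ordered part of $G_2$, and the valued part of $G_1$ is elementarily equivalent to the valued part of $G_2$ (both in the language $\{0,+,-,\precsim\}$).
   Context: A compatible quasi-ordered abelian group is an abelian group $G$ with a total quasi-order $\precsim$ (reflexive, transitive, any two elements comparable) such that, writing $a\sim b$ for $a\precsim b\wedge b\precsim a$: $(Q_1)$ $x\sim0\Rightarrow x=0$; $(Q_2)$ $x\precsim y\wedge y\not\sim z\Rightarrow x+z\precsim y+z$. With $cl(g)$ the $\sim$-class of $g$, $g$ is o-type if $cl(g)=\{g\}$ and $g$ is not of order $2$; $G^o$, the set of o-type elements, is a subgroup. The ordered part of $G$ is $(G^o,\precsim|_{G^o})$; the valued part is $G/G^o$ with the quasi-order $g+G^o\precsim h+G^o\Leftrightarrow g-h\in G^o\vee(g-h\notin G^o\wedge g\precsim h)$. In the language, $-$ is the unary negation and $\precsim$ is interpreted as the quasi-order. *)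

theory Defs
  imports Main
begin

datatype trm = Var nat | Zero | Plus trm trm | Neg trm

datatype fm = FEq trm trm | FLe trm trm | FFalse | FNot fm | FAnd fm fm | FEx nat fm

primrec fv_trm :: "trm \<Rightarrow> nat set" where
  "fv_trm (Var n) = {n}"
| "fv_trm Zero = {}"
| "fv_trm (Plus s t) = fv_trm s \<union> fv_trm t"
| "fv_trm (Neg t) = fv_trm t"

primrec fv :: "fm \<Rightarrow> nat set" where
  "fv (FEq s t) = fv_trm s \<union> fv_trm t"
| "fv (FLe s t) = fv_trm s \<union> fv_trm t"
| "fv FFalse = {}"
| "fv (FNot p) = fv p"
| "fv (FAnd p q) = fv p \<union> fv q"
| "fv (FEx n p) = fv p - {n}"

definition sentence :: "fm \<Rightarrow> bool" where
  "sentence p \<longleftrightarrow> fv p = {}"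

record 'a lstr =
  carrier :: "'a set"
  zer :: 'a
  pls :: "'a \<Rightarrow> 'a \<Rightarrow> 'a"
  ng :: "'a \<Rightarrow> 'a"
  qle :: "'a \<Rightarrow> 'a \<Rightarrow> bool"

primrec evalt :: "'a lstr \<Rightarrow> (nat \<Rightarrow> 'a) \<Rightarrow> trm \<Rightarrow> 'a" where
  "evalt M e (Var n) = e n"
| "evalt M e Zero = zer M"
| "evalt M e (Plus s t) = pls M (evalt M e s) (evalt M e t)"
| "evalt M e (Neg t) = ng M (evalt M e t)"

primrec sat :: "'a lstr \<Rightarrow> (nat \<Rightarrow> 'a) \<Rightarrow> fm \<Rightarrow> bool" where
  "sat M e (FEq s t) = (evalt M e s = evalt M e t)"
| "sat M e (FLe s t) = qle M (evalt M e s) (evalt M e t)"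
| "sat M e FFalse = False"
| "sat M e (FNot p) = (\<not> sat M e p)"
| "sat M e (FAnd p q) = (sat M e p \<and> sat M e q)"
| "sat M e (FEx n p) = (\<exists>a\<in>carrier M. sat M (e(n := a)) p)"

definition models :: "'a lstr \<Rightarrow> fm \<Rightarrow> bool" where
  "models M p \<longleftrightarrow> (\<forall>e. (\<forall>n. e n \<in> carrier M) \<longrightarrow> sat M e p)"

definition elem_equiv :: "'a lstr \<Rightarrow> 'b lstr \<Rightarrow> bool" where
  "elem_equiv M N \<longleftrightarrow> (\<forall>p. sentence p \<longrightarrow> (models M p \<longleftrightarrow> models N p))"

definition qsim :: "('a \<Rightarrow> 'a \<Rightarrow> bool) \<Rightarrow> 'a \<Rightarrow> 'a \<Rightarrow> bool" where
  "qsim le a b \<longleftrightarrow> le a b \<and> le b a"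

definition cqoag :: "('a::ab_group_add \<Rightarrow> 'a \<Rightarrow> bool) \<Rightarrow> bool" where
  "cqoag le \<longleftrightarrow>
     (\<forall>x. le x x) \<and>
     (\<forall>x y z. le x y \<longrightarrow> le y z \<longrightarrow> le x z) \<and>
     (\<forall>x y. le x y \<or> le y x) \<and>
     (\<forall>x. qsim le x 0 \<longrightarrow> x = 0) \<and>
     (\<forall>x y z. le x y \<and> \<not> qsim le y z \<longrightarrow> le (x + z) (y + z))"

definition cl :: "('a \<Rightarrow> 'a \<Rightarrow> bool) \<Rightarrow> 'a \<Rightarrow> 'a set" where
  "cl le g = {h. qsim le h g}"

definition otype :: "('a::ab_group_add \<Rightarrow> 'a \<Rightarrow> bool) \<Rightarrow> 'a \<Rightarrow> bool" where
  "otype le g \<longleftrightarrow> cl le g = {g} \<and> \<not> (g \<noteq> 0 \<and> g + g = 0)"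

definition Go :: "('a::ab_group_add \<Rightarrow> 'a \<Rightarrow> bool) \<Rightarrow> 'a set" where
  "Go le = {g. otype le g}"

definition full_str :: "('a::ab_group_add \<Rightarrow> 'a \<Rightarrow> bool) \<Rightarrow> 'a lstr" where
  "full_str le = \<lparr>carrier = UNIV, zer = 0, pls = (+), ng = uminus, qle = le\<rparr>"

definition ordered_part :: "('a::ab_group_add \<Rightarrow> 'a \<Rightarrow> bool) \<Rightarrow> 'a lstr" where
  "ordered_part le = \<lparr>carrier = Go le, zer = 0, pls = (+), ng = uminus,
     qle = (\<lambda>a b. a \<in> Go le \<and> b \<in> Go le \<and> le a b)\<rparr>"

definition coset :: "('a::ab_group_add \<Rightarrow> 'a \<Rightarrow> bool) \<Rightarrow> 'a \<Rightarrow> 'a set" where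
  "coset le g = (\<lambda>h. g + h) ` Go le"

definition valued_part :: "('a::ab_group_add \<Rightarrow> 'a \<Rightarrow> bool) \<Rightarrow> 'a set lstr" where
  "valued_part le = \<lparr>carrier = range (coset le),
     zer = Go le,
     pls = (\<lambda>A B. {a + b | a b. a \<in> A \<and> b \<in> B}),
     ng = (\<lambda>A. uminus ` A),
     qle = (\<lambda>A B. \<exists>g h. A = coset le g \<and> B = coset le h \<and>
               (g - h \<in> Go le \<or> (g - h \<notin> Go le \<and> le g h)))\<rparr>"

end

theory Submission
  imports Defs
begin

text \<open>
  The subgroup \<open>G\<^sup>o\<close> is definable in \<open>(G, 0, +, -, \<precsim>)\<close> by a formula saying that the
  \<open>\<sim>\<close>-class of \<open>x\<close> is \<open>{x}\<close> and \<open>x\<close> is not of order 2.  So the ordered part is the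
  relativisation of \<open>G\<close> to a definable subgroup, and the valued part is interpretable in \<open>G\<close>:
  equality becomes congruence modulo \<open>G\<^sup>o\<close> and the quotient order is read off representatives.
  Each interpretation maps sentences to sentences preserving truth, so elementary equivalence
  passes to both parts.  The algebraic core is that \<open>G\<^sup>o\<close> is closed under addition: if
  \<open>h \<sim> g + k\<close> with \<open>h \<noteq> g + k\<close>, then \<open>(Q\<^sub>2)\<close> (translating by \<open>-k\<close> or by \<open>-g\<close>) forces
  \<open>g + k \<sim> -k\<close> and \<open>g + k \<sim> -g\<close>, hence \<open>k = g\<close> and \<open>3g = 0\<close>, which \<open>(Q\<^sub>2)\<close> excludes for a
  nonzero o-type \<open>g\<close>.
\<close>

lemma cqoag_refl: "cqoag le \<Longrightarrow> le x x"
  by (simp add: cqoag_def)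

lemma cqoag_trans: "cqoag le \<Longrightarrow> le x y \<Longrightarrow> le y z \<Longrightarrow> le x z"
  unfolding cqoag_def by blast

lemma cqoag_total: "cqoag le \<Longrightarrow> le x y \<or> le y x"
  by (simp add: cqoag_def)

lemma cqoag_qsim_0_eq: "cqoag le \<Longrightarrow> qsim le x 0 \<Longrightarrow> x = 0"
  unfolding cqoag_def by blast

lemma cqoag_add_right: "cqoag le \<Longrightarrow> le x y \<Longrightarrow> \<not> qsim le y z \<Longrightarrow> le (x + z) (y + z)"
  unfolding cqoag_def by blast

lemma qsim_commute: "qsim le a b \<longleftrightarrow> qsim le b a"
  unfolding qsim_def by blast

lemma qsim_trans: "cqoag le \<Longrightarrow> qsim le a b \<Longrightarrow> qsim le b c \<Longrightarrow> qsim le a c"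
  unfolding qsim_def by (metis cqoag_trans)

lemma not_qsim_0: "cqoag le \<Longrightarrow> x \<noteq> 0 \<Longrightarrow> \<not> qsim le 0 x"
  by (metis cqoag_qsim_0_eq qsim_commute)

lemma order2_le_0_eq_0:
  fixes d :: "'a::ab_group_add"
  assumes c: "cqoag le" and "le d 0" and "d + d = 0"
  shows "d = 0"
proof (rule ccontr)
  assume "d \<noteq> 0"
  have "le (d + d) (0 + d)" using cqoag_add_right[OF c \<open>le d 0\<close>] not_qsim_0[OF c \<open>d \<noteq> 0\<close>] .
  then have "le 0 d" using \<open>d + d = 0\<close> by simp
  then show False using \<open>le d 0\<close> \<open>d \<noteq> 0\<close> cqoag_qsim_0_eq[OF c] by (auto simp: qsim_def)
qed

section \<open>The subgroup of o-type elements\<close>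

lemma otype_iff:
  "cqoag le \<Longrightarrow> otype le g \<longleftrightarrow> (\<forall>h. qsim le h g \<longrightarrow> h = g) \<and> \<not> (g \<noteq> 0 \<and> g + g = 0)"
  unfolding otype_def cl_def using cqoag_refl[of le g] by (auto simp: qsim_def)

lemma otype_zero: "cqoag le \<Longrightarrow> otype le 0"
  by (simp add: otype_iff cqoag_qsim_0_eq)

lemma otype_not_qsim_uminus:
  fixes g :: "'a::ab_group_add"
  assumes c: "cqoag le" and g: "otype le g" and "g \<noteq> 0"
  shows "\<not> qsim le g (-g)"
proof
  assume "qsim le g (-g)"
  then have "-g = g" using g otype_iff[OF c] qsim_commute by metis
  then have "g + g = 0" by (metis ab_left_minus)
  then show False using g \<open>g \<noteq> 0\<close> otype_iff[OF c] by blast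
qed

lemma otype_uminus:
  fixes g :: "'a::ab_group_add"
  assumes c: "cqoag le" and g: "otype le g"
  shows "otype le (-g)"
proof (cases "g = 0")
  case True
  then show ?thesis using otype_zero[OF c] by simp
next
  case False
  have nq: "\<not> qsim le (-g) g" using otype_not_qsim_uminus[OF c g False] qsim_commute by metis
  have "h = -g" if hq: "qsim le h (-g)" for h
  proof -
    have "le (h + g) (-g + g)" using cqoag_add_right[OF c, of h "-g" g] hq nq by (auto simp: qsim_def)
    moreover have "\<not> qsim le h g" using hq nq qsim_trans[OF c] qsim_commute by metis
    then have "le (-g + g) (h + g)" using cqoag_add_right[OF c, of "-g" h g] hq by (auto simp: qsim_def)
    ultimately have "h + g = 0" using cqoag_qsim_0_eq[OF c] by (auto simp: qsim_def)
    then show "h = -g" by (simp add: eq_neg_iff_add_eq_0)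
  qed
  moreover have "\<not> (-g \<noteq> 0 \<and> -g + -g = 0)"
    using g otype_iff[OF c] by (metis minus_add_distrib neg_equal_0_iff_equal)
  ultimately show ?thesis using otype_iff[OF c] by blast
qed

lemma otype_order3_eq_0:
  fixes g :: "'a::ab_group_add"
  assumes c: "cqoag le" and g: "otype le g" and g3: "g + g + g = 0"
  shows "g = 0"
proof (rule ccontr)
  assume "g \<noteq> 0"
  have nq: "\<not> qsim le g (-g)" using otype_not_qsim_uminus[OF c g \<open>g \<noteq> 0\<close>] .
  have nq0: "\<not> qsim le 0 g" "\<not> qsim le 0 (-g)" using not_qsim_0[OF c] \<open>g \<noteq> 0\<close> by simp_all
  have twice: "g + g = -g" using g3 by (simp add: eq_neg_iff_add_eq_0)
  then have twice_neg: "-g + -g = g" by (metis minus_add_distrib minus_minus)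
  show False
  proof (cases "le 0 g")
    case True
    have "le (0 + -g) (g + -g)" using cqoag_add_right[OF c True nq] .
    then have neg_le: "le (-g) 0" by simp
    have "le (-g + -g) (0 + -g)" using cqoag_add_right[OF c neg_le nq0(2)] .
    then have "le g 0" using twice_neg neg_le cqoag_trans[OF c] by auto
    then show False using True \<open>g \<noteq> 0\<close> cqoag_qsim_0_eq[OF c] by (auto simp: qsim_def)
  next
    case False
    then have le0: "le g 0" using cqoag_total[OF c] by blast
    have "le (g + g) (0 + g)" using cqoag_add_right[OF c le0 nq0(1)] .
    moreover have "le (g + -g) (0 + -g)" using cqoag_add_right[OF c le0 nq0(2)] .
    ultimately have "le 0 g" using twice cqoag_trans[OF c] by auto
    then show False using False by simp
  qed
qed

lemma qsim_add_eq_if_otype: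
  fixes a b :: "'a::ab_group_add"
  assumes c: "cqoag le" and a: "otype le a"
    and hq: "qsim le h (a + b)" and nq: "\<not> qsim le (a + b) (-b)"
  shows "h = a + b"
proof -
  have "le (h + -b) (a + b + -b)" using cqoag_add_right[OF c, of h "a + b" "-b"] hq nq
    by (auto simp: qsim_def)
  moreover have "\<not> qsim le h (-b)" using hq nq qsim_trans[OF c] qsim_commute by metis
  then have "le (a + b + -b) (h + -b)" using cqoag_add_right[OF c, of "a + b" h "-b"] hq
    by (auto simp: qsim_def)
  ultimately have "h - b = a" using a otype_iff[OF c] by (auto simp: qsim_def)
  then show ?thesis by (simp add: diff_eq_eq)
qed

lemma otype_add_class_singleton:
  fixes g k :: "'a::ab_group_add"
  assumes c: "cqoag le" and g: "otype le g" and k: "otype le k" and hq: "qsim le h (g + k)"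
  shows "h = g + k"
proof (cases "qsim le (g + k) (-k) \<and> qsim le (k + g) (-g)")
  case False
  then show ?thesis
    using qsim_add_eq_if_otype[OF c g hq] qsim_add_eq_if_otype[OF c k, of h g] hq
    by (auto simp: add.commute)
next
  case True
  then have "qsim le (-k) (-g)" using qsim_trans[OF c] qsim_commute by (metis add.commute)
  then have "k = g" using otype_uminus[OF c g] otype_iff[OF c] by (metis minus_equation_iff)
  with True have "g + g = -g" using otype_uminus[OF c g] otype_iff[OF c] by blast
  then have "g = 0" using otype_order3_eq_0[OF c g] by (simp add: eq_neg_iff_add_eq_0)
  then show ?thesis using hq \<open>k = g\<close> cqoag_qsim_0_eq[OF c] by simp
qed

lemma otype_add_not_order2:
  fixes g k :: "'a::ab_group_add"
  assumes c: "cqoag le" and g: "otype le g" and k: "otype le k"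
  shows "\<not> (g + k \<noteq> 0 \<and> (g + k) + (g + k) = 0)"
proof
  assume d: "g + k \<noteq> 0 \<and> (g + k) + (g + k) = 0"
  then have "k \<noteq> 0" "g \<noteq> 0" using g k otype_iff[OF c] by auto
  show False
  proof (cases "le g (-k)")
    case True
    have "\<not> qsim le (-k) k" using otype_not_qsim_uminus[OF c k \<open>k \<noteq> 0\<close>] qsim_commute by metis
    then have "le (g + k) (-k + k)" using cqoag_add_right[OF c True] by blast
    then show False using order2_le_0_eq_0[OF c, of "g + k"] d by simp
  next
    case False
    then have "le (-k) g" using cqoag_total[OF c] by blast
    then have "le (-k + -g) (g + -g)"
      using cqoag_add_right[OF c _ otype_not_qsim_uminus[OF c g \<open>g \<noteq> 0\<close>]] by blast
    moreover have "(-k + -g) + (-k + -g) = 0"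
      using d by (metis add.commute minus_add_distrib neg_equal_0_iff_equal)
    ultimately have "-k + -g = 0" using order2_le_0_eq_0[OF c, of "-k + -g"] by simp
    then show False using d by (metis add.commute minus_add_distrib neg_equal_0_iff_equal)
  qed
qed

lemma otype_add:
  fixes g k :: "'a::ab_group_add"
  assumes c: "cqoag le" and "otype le g" and "otype le k"
  shows "otype le (g + k)"
  using otype_add_class_singleton[OF assms] otype_add_not_order2[OF assms] otype_iff[OF c]
  by blast

lemma zero_in_Go: "cqoag le \<Longrightarrow> 0 \<in> Go le"
  by (simp add: Go_def otype_zero)

lemma uminus_in_Go: "cqoag le \<Longrightarrow> g \<in> Go le \<Longrightarrow> -g \<in> Go le"
  by (simp add: Go_def otype_uminus)

lemma add_in_Go: "cqoag le \<Longrightarrow> g \<in> Go le \<Longrightarrow> k \<in> Go le \<Longrightarrow> g + k \<in> Go le"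
  by (simp add: Go_def otype_add)

lemma mem_coset_iff: "x \<in> coset le a \<longleftrightarrow> x - a \<in> Go le"
  unfolding coset_def by (auto simp: image_iff) (metis add.commute diff_add_cancel)

lemma coset_eq_iff:
  fixes a b :: "'a::ab_group_add"
  assumes c: "cqoag le"
  shows "coset le a = coset le b \<longleftrightarrow> a - b \<in> Go le"
proof
  assume "coset le a = coset le b"
  moreover have "a \<in> coset le a" by (simp add: mem_coset_iff zero_in_Go[OF c])
  ultimately show "a - b \<in> Go le" using mem_coset_iff by blast
next
  assume ab: "a - b \<in> Go le"
  then have ba: "b - a \<in> Go le" using uminus_in_Go[OF c] by (metis minus_diff_eq)
  have "x - b = (x - a) + (a - b)" "x - a = (x - b) + (b - a)" for x by simp_all
  then show "coset le a = coset le b"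
    unfolding set_eq_iff mem_coset_iff using ab ba add_in_Go[OF c] by metis
qed

lemma coset_add:
  fixes a b :: "'a::ab_group_add"
  assumes c: "cqoag le"
  shows "{x + y |x y. x \<in> coset le a \<and> y \<in> coset le b} = coset le (a + b)"
proof (rule set_eqI, rule iffI)
  fix z assume "z \<in> {x + y |x y. x \<in> coset le a \<and> y \<in> coset le b}"
  then obtain x y where "z = x + y" "x - a \<in> Go le" "y - b \<in> Go le"
    using mem_coset_iff by blast
  moreover have "z - (a + b) = (x - a) + (y - b)" using \<open>z = x + y\<close> by simp
  ultimately show "z \<in> coset le (a + b)" using mem_coset_iff add_in_Go[OF c] by metis
next
  fix z assume "z \<in> coset le (a + b)"
  then have "(z - b) - a \<in> Go le" using mem_coset_iff by (metis diff_diff_eq add.commute)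
  moreover have "b - b \<in> Go le" using zero_in_Go[OF c] by simp
  moreover have "z = (z - b) + b" by simp
  ultimately show "z \<in> {x + y |x y. x \<in> coset le a \<and> y \<in> coset le b}"
    using mem_coset_iff by blast
qed

lemma coset_uminus:
  fixes a :: "'a::ab_group_add"
  assumes c: "cqoag le"
  shows "uminus ` coset le a = coset le (-a)"
proof -
  have "-x - -a = -(x - a)" for x by simp
  then have "x \<in> coset le a \<longleftrightarrow> -x \<in> coset le (-a)" for x
    unfolding mem_coset_iff using uminus_in_Go[OF c] by (metis minus_minus)
  then show ?thesis by (auto simp: image_iff) (metis minus_minus)
qed

lemma Go_eq_coset_0: "Go le = coset le 0"
  by (simp add: set_eq_iff mem_coset_iff)

lemma full_str_simps [simp]:
  "carrier (full_str le) = UNIV" "zer (full_str le) = 0" "pls (full_str le) = (+)"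
  "ng (full_str le) = uminus" "qle (full_str le) = le"
  by (simp_all add: full_str_def)

primrec max_var :: "trm \<Rightarrow> nat" where
  "max_var (Var n) = n"
| "max_var Zero = 0"
| "max_var (Plus s t) = max (max_var s) (max_var t)"
| "max_var (Neg t) = max_var t"

abbreviation Minus :: "trm \<Rightarrow> trm \<Rightarrow> trm" where
  "Minus s t \<equiv> Plus s (Neg t)"

abbreviation FOr :: "fm \<Rightarrow> fm \<Rightarrow> fm" where
  "FOr p q \<equiv> FNot (FAnd (FNot p) (FNot q))"

lemma evalt_fun_upd_above: "max_var t < n \<Longrightarrow> evalt M (e(n := a)) t = evalt M e t"
  by (induction t) auto

lemma evalt_cong: "\<forall>n\<in>fv_trm t. e n = e' n \<Longrightarrow> evalt M e t = evalt M e' t"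
  by (induction t) auto

lemma sat_cong: "\<forall>n\<in>fv p. e n = e' n \<Longrightarrow> sat M e p = sat M e' p"
proof (induction p arbitrary: e e')
  case (FEq s t)
  then show ?case using evalt_cong[of s e e' M] evalt_cong[of t e e' M] by simp
next
  case (FLe s t)
  then show ?case using evalt_cong[of s e e' M] evalt_cong[of t e e' M] by simp
next
  case (FEx n p)
  then have "sat M (e(n := a)) p = sat M (e'(n := a)) p" for a by simp
  then show ?case by simp
next
  case (FAnd p q)
  then have "sat M e p = sat M e' p" "sat M e q = sat M e' q" by auto
  then show ?case by simp
qed simp_all

lemma models_iff_sat:
  assumes "sentence p" and "\<And>n. e n \<in> carrier M"
  shows "models M p \<longleftrightarrow> sat M e p"
  using assms sat_cong[of p e] unfolding models_def sentence_def by blast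

definition fm_otype :: "trm \<Rightarrow> fm" where
  "fm_otype t = (let x = Suc (max_var t) in
     FAnd (FNot (FEx x (FAnd (FLe (Var x) t) (FAnd (FLe t (Var x)) (FNot (FEq (Var x) t))))))
          (FNot (FAnd (FNot (FEq t Zero)) (FEq (Plus t t) Zero))))"

lemma fv_fm_otype: "fv (fm_otype t) \<subseteq> fv_trm t"
  by (auto simp: fm_otype_def)

lemma sat_fm_otype:
  assumes "cqoag le"
  shows "sat (full_str le) e (fm_otype t) \<longleftrightarrow> evalt (full_str le) e t \<in> Go le"
  using evalt_fun_upd_above[of t "Suc (max_var t)" "full_str le" e]
  by (simp add: fm_otype_def Go_def otype_iff[OF assms] qsim_def Let_def) blast

lemma elem_equiv_by_translation:
  assumes "elem_equiv M1 M2"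
    and "\<And>p. sentence p \<Longrightarrow> sentence (T p)"
    and "\<And>p. sentence p \<Longrightarrow> models N1 p \<longleftrightarrow> models M1 (T p)"
    and "\<And>p. sentence p \<Longrightarrow> models N2 p \<longleftrightarrow> models M2 (T p)"
  shows "elem_equiv N1 N2"
  using assms unfolding elem_equiv_def by blast

section \<open>The ordered part as a relativisation\<close>

primrec relativize_Go :: "fm \<Rightarrow> fm" where
  "relativize_Go (FEq s t) = FEq s t"
| "relativize_Go (FLe s t) = FAnd (fm_otype s) (FAnd (fm_otype t) (FLe s t))"
| "relativize_Go FFalse = FFalse"
| "relativize_Go (FNot p) = FNot (relativize_Go p)"
| "relativize_Go (FAnd p q) = FAnd (relativize_Go p) (relativize_Go q)"
| "relativize_Go (FEx n p) = FEx n (FAnd (fm_otype (Var n)) (relativize_Go p))"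

lemma fv_relativize_Go: "fv (relativize_Go p) \<subseteq> fv p"
  by (induction p) (use fv_fm_otype in fastforce)+

lemma sentence_relativize_Go: "sentence p \<Longrightarrow> sentence (relativize_Go p)"
  using fv_relativize_Go[of p] by (auto simp: sentence_def)

lemma ordered_part_simps [simp]:
  "carrier (ordered_part le) = Go le" "zer (ordered_part le) = 0" "pls (ordered_part le) = (+)"
  "ng (ordered_part le) = uminus" "qle (ordered_part le) = (\<lambda>a b. a \<in> Go le \<and> b \<in> Go le \<and> le a b)"
  by (simp_all add: ordered_part_def)

lemma evalt_ordered_part: "evalt (ordered_part le) e t = evalt (full_str le) e t"
  by (induction t) simp_all

lemma sat_relativize_Go:
  assumes c: "cqoag le" and "\<And>n. e n \<in> Go le"
  shows "sat (ordered_part le) e p \<longleftrightarrow> sat (full_str le) e (relativize_Go p)"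
  using assms(2)
proof (induction p arbitrary: e)
  case (FLe s t)
  then show ?case
    by (simp add: evalt_ordered_part sat_fm_otype[OF c])
next
  case (FEx n p)
  have "sat (ordered_part le) (e(n := a)) p \<longleftrightarrow> sat (full_str le) (e(n := a)) (relativize_Go p)"
    if "a \<in> Go le" for a
    by (rule FEx.IH) (simp add: that FEx.prems)
  then show ?case
    by (auto simp: sat_fm_otype[OF c])
qed (simp_all add: evalt_ordered_part)

lemma models_relativize_Go:
  assumes c: "cqoag le" and p: "sentence p"
  shows "models (ordered_part le) p \<longleftrightarrow> models (full_str le) (relativize_Go p)"
proof -
  have "models (ordered_part le) p \<longleftrightarrow> sat (ordered_part le) (\<lambda>_. 0) p"
    by (rule models_iff_sat[OF p]) (simp add: zero_in_Go[OF c])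
  also have "\<dots> \<longleftrightarrow> sat (full_str le) (\<lambda>_. 0) (relativize_Go p)"
    by (rule sat_relativize_Go[OF c]) (rule zero_in_Go[OF c])
  also have "\<dots> \<longleftrightarrow> models (full_str le) (relativize_Go p)"
    by (intro models_iff_sat[symmetric] sentence_relativize_Go p) simp
  finally show ?thesis .
qed

section \<open>The valued part as a quotient\<close>

lemma valued_part_simps [simp]:
  "carrier (valued_part le) = range (coset le)" "zer (valued_part le) = Go le"
  "pls (valued_part le) = (\<lambda>A B. {a + b | a b. a \<in> A \<and> b \<in> B})"
  "ng (valued_part le) = (\<lambda>A. uminus ` A)"
  "qle (valued_part le) = (\<lambda>A B. \<exists>g h. A = coset le g \<and> B = coset le h \<and>
     (g - h \<in> Go le \<or> (g - h \<notin> Go le \<and> le g h)))"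
  by (simp_all add: valued_part_def)

lemma evalt_valued_part:
  assumes "cqoag le"
  shows "evalt (valued_part le) (coset le \<circ> f) t = coset le (evalt (full_str le) f t)"
  by (induction t) (simp_all add: coset_add[OF assms] coset_uminus[OF assms] Go_eq_coset_0)

primrec quotient_Go :: "fm \<Rightarrow> fm" where
  "quotient_Go (FEq s t) = fm_otype (Minus s t)"
| "quotient_Go (FLe s t) = (let x = Suc (max (max_var s) (max_var t)); y = Suc x in
     FEx x (FEx y (FAnd (fm_otype (Minus s (Var x))) (FAnd (fm_otype (Minus t (Var y)))
       (FOr (fm_otype (Minus (Var x) (Var y))) (FLe (Var x) (Var y)))))))"
| "quotient_Go FFalse = FFalse"
| "quotient_Go (FNot p) = FNot (quotient_Go p)"
| "quotient_Go (FAnd p q) = FAnd (quotient_Go p) (quotient_Go q)"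
| "quotient_Go (FEx n p) = FEx n (quotient_Go p)"

lemma fv_quotient_Go: "fv (quotient_Go p) \<subseteq> fv p"
  by (induction p) (use fv_fm_otype in \<open>fastforce simp: Let_def\<close>)+

lemma sentence_quotient_Go: "sentence p \<Longrightarrow> sentence (quotient_Go p)"
  using fv_quotient_Go[of p] by (auto simp: sentence_def)

lemma sat_quotient_Go:
  assumes c: "cqoag le"
  shows "sat (valued_part le) (coset le \<circ> f) p \<longleftrightarrow> sat (full_str le) f (quotient_Go p)"
proof (induction p arbitrary: f)
  case (FEq s t)
  then show ?case
    by (simp only: sat.simps evalt_valued_part[OF c] coset_eq_iff[OF c])
      (simp add: sat_fm_otype[OF c])
next
  case (FLe s t)
  let ?x = "Suc (max (max_var s) (max_var t))"
  let ?a = "evalt (full_str le) f s" and ?b = "evalt (full_str le) f t"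
  have "sat (full_str le) f (quotient_Go (FLe s t)) \<longleftrightarrow>
     (\<exists>g h. ?a - g \<in> Go le \<and> ?b - h \<in> Go le \<and> (g - h \<in> Go le \<or> le g h))"
    using evalt_fun_upd_above[of s ?x "full_str le"] evalt_fun_upd_above[of s "Suc ?x" "full_str le"]
      evalt_fun_upd_above[of t ?x "full_str le"] evalt_fun_upd_above[of t "Suc ?x" "full_str le"]
    by (auto simp: Let_def sat_fm_otype[OF c])
  also have "\<dots> \<longleftrightarrow> qle (valued_part le) (coset le ?a) (coset le ?b)"
    by (auto simp: coset_eq_iff[OF c])
  finally show ?case unfolding sat.simps evalt_valued_part[OF c] by blast
next
  case (FEx n p)
  have "sat (valued_part le) (coset le \<circ> f) (FEx n p) \<longleftrightarrow>
        (\<exists>a. sat (valued_part le) (coset le \<circ> f(n := a)) p)"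
    by (auto simp: fun_upd_comp)
  also have "\<dots> \<longleftrightarrow> (\<exists>a. sat (full_str le) (f(n := a)) (quotient_Go p))"
    by (simp only: FEx.IH)
  also have "\<dots> \<longleftrightarrow> sat (full_str le) f (quotient_Go (FEx n p))"
    by simp
  finally show ?case .
qed auto

lemma models_quotient_Go:
  assumes c: "cqoag le"
  shows "models (valued_part le) p \<longleftrightarrow> models (full_str le) (quotient_Go p)"
proof -
  have "models (valued_part le) p \<longleftrightarrow> (\<forall>f. sat (valued_part le) (coset le \<circ> f) p)"
  proof (intro iffI allI)
    fix f assume "models (valued_part le) p"
    then show "sat (valued_part le) (coset le \<circ> f) p" by (simp add: models_def)
  next
    assume all: "\<forall>f. sat (valued_part le) (coset le \<circ> f) p"
    show "models (valued_part le) p" unfolding models_def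
    proof (intro allI impI)
      fix e :: "nat \<Rightarrow> 'a set" assume "\<forall>n. e n \<in> carrier (valued_part le)"
      then have "\<forall>n. \<exists>a. e n = coset le a" by auto
      then obtain f where "e = coset le \<circ> f" by (metis comp_apply ext)
      then show "sat (valued_part le) e p" using all by simp
    qed
  qed
  then show ?thesis by (simp add: models_def sat_quotient_Go[OF c])
qed

theorem mainTheorem16:
  fixes le1 :: "'a::ab_group_add \<Rightarrow> 'a \<Rightarrow> bool"
    and le2 :: "'b::ab_group_add \<Rightarrow> 'b \<Rightarrow> bool"
  assumes "cqoag le1" and "cqoag le2"
    and "elem_equiv (full_str le1) (full_str le2)"
  shows "elem_equiv (ordered_part le1) (ordered_part le2)
       \<and> elem_equiv (valued_part le1) (valued_part le2)"
proof
  show "elem_equiv (ordered_part le1) (ordered_part le2)"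
    by (rule elem_equiv_by_translation[OF assms(3)])
      (simp_all add: sentence_relativize_Go models_relativize_Go assms(1,2))
  show "elem_equiv (valued_part le1) (valued_part le2)"
    by (rule elem_equiv_by_translation[OF assms(3)])
      (simp_all add: sentence_quotient_Go models_quotient_Go assms(1,2))
qed

end
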